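(* Let $q\in\mathbb{N}$ be odd and square-free. Then if $Q$ is an integral ternary quadratic form with $\gcd(\det(Q),q)=1$ we have \[m(Q;q)\ll q^{1/2}\,\widehat{m}(-Q^{\mathrm{adj}};q)^{1/2},\] with an absolute implied constant. In particular one has \[B_3^*(q)\ll q^{1/2}\,\widehat{B}_3(q)^{1/2}.\]
   Context: $\|\cdot\|$ is the Euclidean norm. Since $q$ is odd, an integral quadratic form $Q$ in $n$ variables is represented modulo $q$ by a symmetric integer matrix $M$ (so $Q(\mathbf{x})\equiv\mathbf{x}^TM\mathbf{x}\pmod q$); $\det(Q)$ means $\det(M)$, and $Q^{\mathrm{adj}}$ denotes the quadratic form with matrix the adjugate matrix of $M$, so $-Q^{\mathrm{adj}}$ is the form $\mathbf{y}\mapsto-\mathbf{y}^T\mathrm{adj}(M)\mathbf{y}$. Define $m(Q;q):=\min\{\|\mathbf{x}\|:\ \mathbf{x}\in\mathbb{Z}^n\setminus\{\mathbf{0}\},\ Q(\mathbf{x})\equiv0\pmod q\}$ and $\widehat{m}(Q;q):=\min\{\|\mathbf{x}\|:\ \mathbf{x}\in\mathbb{Z}^n\setminus\{\mathbf{0}\},\ \exists t\in\mathbb{Z},\ Q(\mathbf{x})\equiv t^2\pmod q\}$. Define $B_3^*(q):=\max_Q m(Q;q)$ over integral ternary forms $Q$ with $\gcd(\det(Q),q)=1$, and $\widehat{B}_n(q):=\max_Q\widehat{m}(Q;q)$ over integral quadratic forms $Q$ in $n$ variables with $\gcd(\det(Q),q)=1$. *)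

theory Defs
  imports "HOL-Analysis.Analysis" "HOL-Computational_Algebra.Squarefree" "HOL-Number_Theory.Cong"
begin

definition qform :: "int^'n^'n \<Rightarrow> int^'n \<Rightarrow> int" where
  "qform M x = (\<Sum>i\<in>UNIV. \<Sum>j\<in>UNIV. M$i$j * x$i * x$j)"

definition adjugate :: "int^'n^'n \<Rightarrow> int^'n^'n" where
  "adjugate M = (\<chi> i j. det (\<chi> k l. if k = j then (if l = i then 1 else 0) else M$k$l))"

definition inorm :: "int^'n \<Rightarrow> real" where
  "inorm x = sqrt (\<Sum>i\<in>UNIV. (real_of_int (x$i))^2)"

definition mQ :: "int^'n^'n \<Rightarrow> nat \<Rightarrow> real" where
  "mQ M q = Inf {inorm x | x. x \<noteq> 0 \<and> [qform M x = 0] (mod int q)}"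

definition mhatQ :: "int^'n^'n \<Rightarrow> nat \<Rightarrow> real" where
  "mhatQ M q = Inf {inorm x | x. x \<noteq> 0 \<and> (\<exists>t::int. [qform M x = t^2] (mod int q))}"

definition admissible :: "int^'n^'n \<Rightarrow> nat \<Rightarrow> bool" where
  "admissible M q \<longleftrightarrow> transpose M = M \<and> coprime (det M) (int q)"

definition B3star :: "nat \<Rightarrow> real" where
  "B3star q = Sup {mQ (M::int^3^3) q | M. admissible M q}"

definition Bhat3 :: "nat \<Rightarrow> real" where
  "Bhat3 q = Sup {mhatQ (M::int^3^3) q | M. admissible M q}"

end

theory Submission
  imports Defs
begin

text \<open>Let \<open>y \<noteq> 0\<close> with \<open>-Q\<^sup>a\<^sup>d\<^sup>j(y) \<equiv> t\<^sup>2 (mod q)\<close>. For a prime \<open>p\<close> dividing \<open>q\<close> but not the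
  content of \<open>y\<close>, pick \<open>u, v \<bottom> y\<close> with \<open>u \<times> v = y\<^sub>k y\<close>; the Gram identity
  \<open>Q(u) Q(v) - B(u,v)\<^sup>2 = Q\<^sup>a\<^sup>d\<^sup>j(u \<times> v)\<close> shows that \<open>Q\<close> restricted to \<open>y\<^sup>\<bottom>\<close> has square
  discriminant mod \<open>p\<close>, hence an isotropic vector \<open>w\<close>. Then \<open>Q(x) \<equiv> 0 (mod p)\<close> on the
  lattice of all \<open>x\<close> with \<open>x \<cdot> y \<equiv> x \<cdot> (w \<times> e\<^sub>k) \<equiv> 0\<close>, whose points are \<open>\<equiv> \<lambda> w\<close>.
  Write \<open>q = q\<^sub>1 q\<^sub>2\<close> with \<open>q\<^sub>2\<close> the part of \<open>q\<close> dividing the content \<open>G\<close> of \<open>y = G y'\<close>.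
  A pigeonhole argument over the box \<open>[0, H]\<^sup>3\<close>, \<open>H \<approx> (|y'| q\<^sub>1)\<^sup>1\<^sup>/\<^sup>2\<close>, gives \<open>d \<noteq> 0\<close>
  with \<open>d \<cdot> y' = 0\<close> meeting all these congruences, so \<open>x = q\<^sub>2 d\<close> is a zero of \<open>Q\<close> mod \<open>q\<close>
  of norm \<open>\<ll> (q |y|)\<^sup>1\<^sup>/\<^sup>2\<close>.\<close>

section \<open>Cross and dot products of integer vectors\<close>

definition icross :: "int^3 \<Rightarrow> int^3 \<Rightarrow> int^3" where
  "icross a b = vector [a$2*b$3 - a$3*b$2, a$3*b$1 - a$1*b$3, a$1*b$2 - a$2*b$1]"

definition idot :: "int^'n \<Rightarrow> int^'n \<Rightarrow> int" where
  "idot a b = (\<Sum>i\<in>UNIV. a$i * b$i)"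

lemma icross_nth [simp]:
  "icross a b $ 1 = a$2*b$3 - a$3*b$2"
  "icross a b $ 2 = a$3*b$1 - a$1*b$3"
  "icross a b $ 3 = a$1*b$2 - a$2*b$1"
  by (simp_all add: icross_def)

lemma idot_3: "idot (a::int^3) b = a$1*b$1 + a$2*b$2 + a$3*b$3"
  unfolding idot_def by (simp add: sum_3)

lemma idot_add_smult_left: "idot (a *s u + b *s v) y = a * idot u y + b * idot v y"
  unfolding idot_def by (simp add: sum.distrib sum_distrib_left algebra_simps)

lemma idot_diff_left: "idot (u - v) y = idot u y - idot v y"
  unfolding idot_def by (simp add: sum_subtractf left_diff_distrib)

lemma idot_smult_right: "idot x (c *s y) = c * idot x y"
  unfolding idot_def by (simp add: sum_distrib_left algebra_simps)

lemma idot_commute: "idot a b = idot b a"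
  unfolding idot_def by (simp add: mult.commute)

lemma idot_axis_right: "idot x (axis k 1) = x$k"
  unfolding idot_def axis_def by (simp add: if_distrib cong: if_cong)

lemma icross_icross_right: "icross x (icross a y) = idot x y *s a - idot x a *s y"
  by (simp add: vec_eq_iff forall_3 idot_3 algebra_simps)

lemma icross_icross_left: "icross (icross w b) y = idot w y *s b - idot b y *s w"
  by (simp add: vec_eq_iff forall_3 idot_3 algebra_simps)

lemma icross_icross_icross: "icross (icross y a) (icross y b) = idot y (icross a b) *s y"
  by (simp add: vec_eq_iff forall_3 idot_3 algebra_simps)

lemma icross_diff_smult_right: "icross x (s *s b - r *s w) = s *s icross x b - r *s icross x w"
  by (simp add: vec_eq_iff forall_3 algebra_simps)

lemma icross_add_smult_right: "icross u (a *s u + b *s v) = b *s icross u v"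
  by (simp add: vec_eq_iff forall_3 algebra_simps)

lemma icross_commute: "icross u w = - icross w u"
  by (simp add: vec_eq_iff forall_3 algebra_simps)

lemma idot_icross_self: "idot (icross y a) y = 0"
  by (simp add: idot_3 algebra_simps)

lemma dvd_icross_nth: "(\<And>i. p dvd u$i) \<Longrightarrow> p dvd icross u v $ k"
  using exhaust_3[of k] by auto

lemma icross_eq_axis: "\<exists>a b. icross a b = axis k (1::int)"
proof -
  consider "k = 1" | "k = 2" | "k = 3" using exhaust_3 by blast
  then show ?thesis
  proof cases
    case 1
    have "icross (axis 2 1) (axis 3 1) = axis k (1::int)"
      using 1 by (simp add: vec_eq_iff forall_3 axis_def)
    then show ?thesis by blast
  next
    case 2
    have "icross (axis 3 1) (axis 1 1) = axis k (1::int)"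
      using 2 by (simp add: vec_eq_iff forall_3 axis_def)
    then show ?thesis by blast
  next
    case 3
    have "icross (axis 1 1) (axis 2 1) = axis k (1::int)"
      using 3 by (simp add: vec_eq_iff forall_3 axis_def)
    then show ?thesis by blast
  qed
qed

lemma orthogonal_pair_icross_eq:
  "\<exists>u v. idot u y = 0 \<and> idot v y = 0 \<and> icross u v = y$k *s y"
proof -
  obtain a b where "icross a b = axis k 1" using icross_eq_axis by blast
  then have "icross (icross y a) (icross y b) = y$k *s y"
    by (simp add: icross_icross_icross idot_axis_right)
  then show ?thesis using idot_icross_self by blast
qed

section \<open>Quadratic forms and the adjugate\<close>

definition bform :: "int^'n^'n \<Rightarrow> int^'n \<Rightarrow> int^'n \<Rightarrow> int" where
  "bform M x z = (\<Sum>i\<in>UNIV. \<Sum>j\<in>UNIV. M$i$j * x$i * z$j)"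

lemma symmetric_matrix_nth: "transpose M = M \<Longrightarrow> M$j$i = M$i$j"
  by (metis transpose_def vec_lambda_beta)

lemma qform_3: "qform (M::int^3^3) x =
   M$1$1*x$1*x$1 + M$1$2*x$1*x$2 + M$1$3*x$1*x$3 +
   M$2$1*x$2*x$1 + M$2$2*x$2*x$2 + M$2$3*x$2*x$3 +
   M$3$1*x$3*x$1 + M$3$2*x$3*x$2 + M$3$3*x$3*x$3"
  unfolding qform_def by (simp add: sum_3 algebra_simps)

lemma bform_3: "bform (M::int^3^3) x z =
   M$1$1*x$1*z$1 + M$1$2*x$1*z$2 + M$1$3*x$1*z$3 +
   M$2$1*x$2*z$1 + M$2$2*x$2*z$2 + M$2$3*x$2*z$3 +
   M$3$1*x$3*z$1 + M$3$2*x$3*z$2 + M$3$3*x$3*z$3"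
  unfolding bform_def by (simp add: sum_3 algebra_simps)

lemma adjugate_3:
  fixes M :: "int^3^3"
  shows "adjugate M $1$1 = M$2$2*M$3$3 - M$2$3*M$3$2"
    "adjugate M $1$2 = M$1$3*M$3$2 - M$1$2*M$3$3"
    "adjugate M $1$3 = M$1$2*M$2$3 - M$1$3*M$2$2"
    "adjugate M $2$1 = M$2$3*M$3$1 - M$2$1*M$3$3"
    "adjugate M $2$2 = M$1$1*M$3$3 - M$1$3*M$3$1"
    "adjugate M $2$3 = M$1$3*M$2$1 - M$1$1*M$2$3"
    "adjugate M $3$1 = M$2$1*M$3$2 - M$2$2*M$3$1"
    "adjugate M $3$2 = M$1$2*M$3$1 - M$1$1*M$3$2"
    "adjugate M $3$3 = M$1$1*M$2$2 - M$1$2*M$2$1"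
  unfolding adjugate_def by (simp_all add: det_3 algebra_simps)

lemma matrix_mul_adjugate_3: "M ** adjugate M = mat (det M)" for M :: "int^3^3"
proof -
  have "(M ** adjugate M) $ i $ j = mat (det M) $ i $ j" for i j
    unfolding matrix_matrix_mult_def mat_def using exhaust_3[of i] exhaust_3[of j]
    by (auto simp: sum_3 adjugate_3 det_3 algebra_simps)
  then show ?thesis
    by (simp add: vec_eq_iff)
qed

lemma det_adjugate_3:
  assumes "det (M::int^3^3) \<noteq> 0"
  shows "det (adjugate M) = det M ^ 2"
proof -
  have "det M * det (adjugate M) = det (mat (det M) :: int^3^3)"
    by (metis det_mul matrix_mul_adjugate_3)
  also have "\<dots> = det M * det M ^ 2"
    by (simp add: det_3 mat_def power2_eq_square)
  finally show ?thesis
    using assms by simp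
qed

lemma qform_smult: "qform M (c *s x) = c^2 * qform M x"
  unfolding qform_def power2_eq_square by (simp add: sum_distrib_left algebra_simps)

lemma qform_uminus_matrix: "qform (- M) x = - qform M x"
  unfolding qform_def by (simp add: sum_negf)

lemma bform_commute: "transpose M = M \<Longrightarrow> bform M v u = bform M u v"
  unfolding bform_def by (subst sum.swap) (simp add: symmetric_matrix_nth algebra_simps)

lemma qform_add_smult:
  assumes "transpose M = M"
  shows "qform M (a *s u + b *s v) = a^2 * qform M u + 2*a*b * bform M u v + b^2 * qform M v"
proof -
  have "qform M (a *s u + b *s v) = a^2 * qform M u + a*b * (bform M u v + bform M v u) + b^2 * qform M v"
    unfolding qform_def bform_def power2_eq_square
    by (simp add: sum.distrib sum_distrib_left algebra_simps)
  then show ?thesis using bform_commute[OF assms] by (simp add: algebra_simps)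
qed

lemma qform_binary_root:
  assumes "transpose M = M"
  shows "qform M ((r - bform M u v) *s u + qform M u *s v)
    = - qform M u * ((bform M u v)^2 - qform M u * qform M v - r^2)"
  unfolding qform_add_smult[OF assms] by (simp add: algebra_simps power2_eq_square)

lemma qform_mult_minus_bform_sq:
  assumes "transpose (M::int^3^3) = M"
  shows "qform M u * qform M v - (bform M u v)^2 = qform (adjugate M) (icross u v)"
proof -
  have "M$2$1 = M$1$2" "M$3$1 = M$1$3" "M$3$2 = M$2$3"
    using symmetric_matrix_nth[OF assms] by auto
  then show ?thesis unfolding qform_3 bform_3 adjugate_3 icross_nth
    by (simp add: power2_eq_square algebra_simps)
qed

lemma qform_scaled_diff:
  "w$j^2 * qform M x - x$j^2 * qform M w =
   (\<Sum>i\<in>UNIV. \<Sum>l\<in>UNIV. M$i$l * (x$i*w$j * (x$l*w$j - x$j*w$l) + x$j*w$l * (x$i*w$j - x$j*w$i)))"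
  unfolding qform_def sum_distrib_left sum_subtractf[symmetric]
  by (intro sum.cong refl) (simp add: algebra_simps power2_eq_square)

section \<open>An isotropic line modulo a prime\<close>

lemma isotropic_vector_orthogonal_mod_prime:
  fixes M :: "int^3^3"
  assumes p: "prime (p::int)" and M: "transpose M = M" and yk: "\<not> p dvd y$k"
    and sq: "p dvd qform (- adjugate M) y - t^2"
  obtains w j where "\<not> p dvd w$j" "idot w y = 0" "p dvd qform M w"
proof -
  obtain u v where uv: "idot u y = 0" "idot v y = 0" "icross u v = y$k *s y"
    using orthogonal_pair_icross_eq by blast
  define A B C where "A = qform M u" and "B = bform M u v" and "C = qform M v"
  have "A * C - B^2 = (y$k)^2 * qform (adjugate M) y"
    using qform_mult_minus_bform_sq[OF M, of u v] uv(3) by (simp add: A_def B_def C_def qform_smult)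
  then have "B^2 - A*C - (y$k * t)^2 = (y$k)^2 * (qform (- adjugate M) y - t^2)"
    by (simp add: qform_uminus_matrix algebra_simps power2_eq_square)
  then have disc: "p dvd B^2 - A*C - (y$k * t)^2"
    using sq by simp
  have uv_k: "icross u v $ k = y$k * y$k"
    using uv(3) by simp
  have ykk: "\<not> p dvd y$k * y$k"
    using p yk by (simp add: prime_dvd_mult_iff)
  show thesis
  proof (cases "p dvd A")
    case True
    have "\<not> (\<forall>i. p dvd u$i)"
      using dvd_icross_nth[of p u v k] uv_k ykk by auto
    then show thesis using that True uv(1) unfolding A_def by blast
  next
    case False
    define w where "w = (y$k * t - B) *s u + A *s v"
    have "p dvd qform M w"
      using disc qform_binary_root[OF M, of "y$k * t" u v] by (simp add: w_def A_def B_def C_def)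
    moreover have "idot w y = 0"
      unfolding w_def idot_add_smult_left uv by simp
    moreover have "\<not> (\<forall>i. p dvd w$i)"
    proof
      assume "\<forall>i. p dvd w$i"
      then have "p dvd icross w u $ k"
        by (intro dvd_icross_nth) simp
      moreover have "icross u w = A *s icross u v"
        unfolding w_def by (rule icross_add_smult_right)
      then have "icross w u $ k = - (A * (y$k * y$k))"
        by (subst icross_commute) (simp add: uv_k)
      ultimately show False
        using False ykk p by (simp add: prime_dvd_mult_iff)
    qed
    ultimately show thesis using that by blast
  qed
qed

lemma qform_dvd_if_icross_dvd:
  fixes M :: "int^3^3"
  assumes p: "prime (p::int)" and wj: "\<not> p dvd w$j" and qw: "p dvd qform M w"
    and xw: "\<And>i. p dvd icross x w $ i"
  shows "p dvd qform M x"
proof -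
  have minor: "p dvd x$i*w$l - x$l*w$i" for i l
  proof -
    have "p dvd x$2*w$3 - x$3*w$2" "p dvd x$3*w$1 - x$1*w$3" "p dvd x$1*w$2 - x$2*w$1"
      using xw[of 1] xw[of 2] xw[of 3] by simp_all
    then have "p dvd x$3*w$2 - x$2*w$3" "p dvd x$1*w$3 - x$3*w$1" "p dvd x$2*w$1 - x$1*w$2"
      and "p dvd x$2*w$3 - x$3*w$2" "p dvd x$3*w$1 - x$1*w$3" "p dvd x$1*w$2 - x$2*w$1"
      by (metis dvd_minus_iff minus_diff_eq)+
    then show ?thesis using exhaust_3[of i] exhaust_3[of l] by auto
  qed
  have "p dvd w$j^2 * qform M x - x$j^2 * qform M w"
    unfolding qform_scaled_diff by (intro dvd_sum dvd_mult dvd_add) (use minor in auto)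
  then have "p dvd w$j^2 * qform M x"
    using qw by (metis dvd_add dvd_mult diff_add_cancel)
  then show ?thesis
    using wj p by (simp add: prime_dvd_mult_iff prime_dvd_power_iff)
qed

lemma qform_vanishes_on_line_mod_prime:
  fixes M :: "int^3^3"
  assumes p: "prime (p::int)" and M: "transpose M = M" and yk: "\<not> p dvd y$k"
    and sq: "p dvd qform (- adjugate M) y - t^2"
  shows "\<exists>a. \<forall>x. p dvd idot x y \<longrightarrow> p dvd idot x a \<longrightarrow> p dvd qform M x"
proof -
  obtain w j where w: "\<not> p dvd w$j" "idot w y = 0" "p dvd qform M w"
    using isotropic_vector_orthogonal_mod_prime[OF assms] .
  define b where "b = axis k (1::int)"
  have by_k: "idot b y = y$k"
    unfolding b_def by (subst idot_commute) (rule idot_axis_right)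
  show ?thesis
  proof (intro exI allI impI)
    fix x assume xy: "p dvd idot x y" and xa: "p dvd idot x (icross w b)"
    have "p dvd icross x w $ i" for i
    proof -
      \<comment> \<open>Both sides are \<open>x \<times> ((w \<times> b) \<times> y)\<close>.\<close>
      have "idot x y *s icross w b - idot x (icross w b) *s y = - (idot b y *s icross x w)"
        using icross_icross_right[of x "icross w b" y] icross_icross_left[of w b y]
          icross_diff_smult_right[of x "idot w y" b "idot b y" w] w(2)
        by simp
      moreover have "p dvd (idot x y *s icross w b - idot x (icross w b) *s y) $ i"
        using xy xa by simp
      ultimately have "p dvd y$k * icross x w $ i"
        by (simp add: by_k)
      then show ?thesis
        using p yk by (simp add: prime_dvd_mult_iff)
    qed
    then show "p dvd qform M x"
      using qform_dvd_if_icross_dvd[OF p w(1) w(3)] by blast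
  qed
qed

section \<open>Squarefree moduli\<close>

lemma squarefree_imp_pos: "squarefree (q::nat) \<Longrightarrow> q > 0"
  by (intro gr0I notI) simp

lemma squarefree_dvdI:
  fixes n z :: "'a::factorial_semiring"
  assumes n: "squarefree n" and dvd: "\<And>p. prime p \<Longrightarrow> p dvd n \<Longrightarrow> p dvd z"
  shows "n dvd z"
proof (cases "z = 0")
  case False
  have "n \<noteq> 0" using n by auto
  then show ?thesis
  proof (rule multiplicity_le_imp_dvd)
    fix p :: 'a assume p: "prime p"
    show "multiplicity p n \<le> multiplicity p z"
    proof (cases "p dvd n")
      case True
      have "multiplicity p n \<le> 1"
        using n \<open>n \<noteq> 0\<close> p squarefree_factorial_semiring'' by blast
      moreover have "0 < multiplicity p z"
        using dvd[OF p True] False p by (simp add: multiplicity_gt_zero_iff)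
      ultimately show ?thesis by linarith
    qed (simp add: not_dvd_imp_multiplicity_0)
  qed
qed simp

lemma prod_prime_factors_squarefree:
  assumes "squarefree (n::nat)"
  shows "(\<Prod>p\<in>prime_factors n. p) = n"
proof -
  have "n \<noteq> 0"
    using squarefree_imp_pos[OF assms] by simp
  then have "(\<Prod>p\<in>prime_factors n. p) = (\<Prod>p\<in>prime_factors n. p ^ multiplicity p n)"
    using assms by (intro prod.cong refl) (simp add: squarefree_factorial_semiring')
  also have "\<dots> = n"
    using prod_prime_factors[OF \<open>n \<noteq> 0\<close>] by simp
  finally show ?thesis .
qed

lemma int_vector_content:
  fixes y :: "int^'n"
  assumes "y \<noteq> 0"
  obtains G y' where "G > 0" "y = G *s y'" "\<And>p. (\<And>k. p dvd y$k) \<Longrightarrow> p dvd G"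
proof
  define G where "G = Gcd (range (vec_nth y))"
  have G_dvd: "G dvd y$i" for i
    unfolding G_def by (rule Gcd_dvd) simp
  then show "y = G *s (\<chi> i. y$i div G)"
    by (simp add: vec_eq_iff)
  have "G \<noteq> 0"
    using assms by (auto simp: G_def vec_eq_iff)
  then show "G > 0"
    unfolding G_def by (metis Gcd_int_greater_eq_0 order_le_less)
  show "p dvd G" if "\<And>k. p dvd y$k" for p
    unfolding G_def using that by (intro Gcd_greatest) auto
qed

lemma squarefree_modulus_split:
  fixes y :: "int^'n"
  assumes q: "squarefree q" and y: "y \<noteq> 0"
  obtains q1 q2 G y' where "q = q1 * q2" "y = G *s y'" "0 < q2" "int q2 \<le> G"
    "\<And>p. prime p \<Longrightarrow> p dvd q1 \<Longrightarrow> \<exists>k. \<not> int p dvd y$k"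
proof -
  obtain G y' where G: "G > 0" "y = G *s y'" and content: "\<And>p. (\<And>k. p dvd y$k) \<Longrightarrow> p dvd G"
    using int_vector_content[OF y] by blast
  define q2 where "q2 = nat (gcd (int q) G)"
  have q2: "int q2 = gcd (int q) G"
    unfolding q2_def by simp
  then have "q2 dvd q"
    by (metis gcd_dvd1 int_dvd_int_iff)
  define q1 where "q1 = q div q2"
  have qq: "q = q1 * q2"
    using \<open>q2 dvd q\<close> by (simp add: q1_def)
  show thesis
  proof (rule that[OF qq G(2)])
    show "0 < q2"
      using squarefree_imp_pos[OF q] q2 by (metis gcd_eq_0_iff gr0I of_nat_0 of_nat_eq_0_iff not_gr0)
    show "int q2 \<le> G"
      using G(1) q2 by (simp add: zdvd_imp_le)
    fix p assume p: "prime p" "p dvd q1"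
    show "\<exists>k. \<not> int p dvd y$k"
    proof (rule ccontr)
      assume "\<nexists>k. \<not> int p dvd y$k"
      then have "int p dvd G"
        using content by blast
      moreover have "int p dvd int q"
        using p(2) qq by simp
      ultimately have "p dvd q2"
        using q2 by (metis gcd_greatest int_dvd_int_iff)
      then have "p ^ 2 dvd q"
        using p(2) qq by (simp add: power2_eq_square mult_dvd_mono)
      then show False
        using q p(1) squarefreeD by (metis not_prime_unit)
    qed
  qed
qed

section \<open>Norms and a pigeonhole bound\<close>

lemma inorm_nonneg: "inorm x \<ge> 0"
  unfolding inorm_def by (simp add: sum_nonneg)

lemma inorm_sq: "inorm x ^ 2 = (\<Sum>i\<in>UNIV. real_of_int (x$i) ^ 2)"
  unfolding inorm_def by (simp add: sum_nonneg)

lemma abs_nth_le_inorm: "\<bar>real_of_int (x$i)\<bar> \<le> inorm x"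
proof -
  have "real_of_int (x$i) ^ 2 \<le> (\<Sum>j\<in>UNIV. real_of_int (x$j) ^ 2)"
    by (rule member_le_sum) auto
  then show ?thesis
    unfolding inorm_def by (metis real_sqrt_abs real_sqrt_le_mono)
qed

lemma inorm_smult: "inorm (c *s x) = \<bar>real_of_int c\<bar> * inorm x"
  unfolding inorm_def by (simp add: power_mult_distrib sum_distrib_left[symmetric] real_sqrt_mult)

lemma sum_abs_nth_le_inorm: "real_of_int (\<Sum>i\<in>UNIV. \<bar>x$i\<bar>) \<le> real CARD('n) * inorm (x::int^'n)"
proof -
  have "real_of_int (\<Sum>i\<in>UNIV. \<bar>x$i\<bar>) \<le> (\<Sum>i\<in>(UNIV::'n set). inorm x)"
    unfolding of_int_sum by (intro sum_mono) (use abs_nth_le_inorm in auto)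
  then show ?thesis by simp
qed

lemma inorm_sq_le_if_abs_nth_le:
  assumes "\<forall>i. \<bar>x$i\<bar> \<le> int H"
  shows "inorm (x::int^'n) ^ 2 \<le> real CARD('n) * real H ^ 2"
proof -
  have "real_of_int (x$i) ^ 2 \<le> real H ^ 2" for i
  proof -
    have "\<bar>real_of_int (x$i)\<bar> \<le> real H"
      using assms by (metis of_int_abs of_int_le_iff of_int_of_nat_eq)
    then show ?thesis
      by (metis abs_ge_zero power2_abs power_mono)
  qed
  then have "inorm x ^ 2 \<le> (\<Sum>i\<in>(UNIV::'n set). real H ^ 2)"
    unfolding inorm_sq by (intro sum_mono) auto
  then show ?thesis by simp
qed

lemma abs_idot_le:
  assumes "\<forall>i. \<bar>x$i\<bar> \<le> c"
  shows "\<bar>idot x y\<bar> \<le> c * (\<Sum>i\<in>UNIV. \<bar>y$i\<bar>)"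
proof -
  have "\<bar>idot x y\<bar> \<le> (\<Sum>i\<in>UNIV. \<bar>x$i\<bar> * \<bar>y$i\<bar>)"
    unfolding idot_def abs_mult[symmetric] by (rule sum_abs)
  also have "\<dots> \<le> (\<Sum>i\<in>UNIV. c * \<bar>y$i\<bar>)"
    using assms by (intro sum_mono mult_right_mono) auto
  finally show ?thesis
    by (simp add: sum_distrib_left)
qed

lemma card_box: "card {x::int^'n. \<forall>i. x$i \<in> {0..int H}} = (H+1)^CARD('n)"
proof -
  have "{x::int^'n. \<forall>i. x$i \<in> {0..int H}} = vec_lambda ` PiE UNIV (\<lambda>_. {0..int H})"
  proof (intro equalityI subsetI)
    fix x :: "int^'n" assume "x \<in> {x. \<forall>i. x$i \<in> {0..int H}}"
    then have "vec_nth x \<in> PiE UNIV (\<lambda>_. {0..int H})" by auto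
    then show "x \<in> vec_lambda ` PiE UNIV (\<lambda>_. {0..int H})"
      by (metis image_eqI vec_nth_inverse)
  qed auto
  moreover have "inj_on vec_lambda (PiE UNIV (\<lambda>_. {0..int H}) :: ('n \<Rightarrow> int) set)"
    by (intro inj_onI) (simp add: vec_lambda_inject)
  moreover have "card {0..int H} = H + 1"
    by simp
  ultimately show ?thesis
    by (simp add: card_image card_PiE del: card_atLeastAtMost_int)
qed

lemma box_pigeonhole:
  assumes "finite T" "card T < (H+1)^CARD('n)" "\<And>x::int^'n. \<forall>i. x$i \<in> {0..int H} \<Longrightarrow> f x \<in> T"
  obtains x1 x2 :: "int^'n" where "x1 \<noteq> x2" "f x1 = f x2" "\<forall>i. \<bar>(x1 - x2)$i\<bar> \<le> int H"
proof -
  define B where "B = {x::int^'n. \<forall>i. x$i \<in> {0..int H}}"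
  have "\<not> inj_on f B"
    using card_inj_on_le[of f B T] assms unfolding B_def card_box by fastforce
  then obtain x1 x2 where x: "x1 \<in> B" "x2 \<in> B" "x1 \<noteq> x2" "f x1 = f x2"
    unfolding inj_on_def by blast
  have "\<bar>(x1 - x2)$i\<bar> \<le> int H" for i
  proof -
    have "x1$i \<in> {0..int H}" "x2$i \<in> {0..int H}"
      using x(1,2) by (simp_all add: B_def)
    then show ?thesis
      by (simp add: abs_le_iff)
  qed
  then show thesis
    using that x(3,4) by blast
qed

lemma small_vector_orthogonal_with_congruences:
  fixes y :: "int^'n" and a :: "nat \<Rightarrow> int^'n"
  assumes P: "finite P" "0 \<notin> P"
    and count: "nat (2 * (\<Sum>i\<in>UNIV. \<bar>y$i\<bar>) * int H + 1) * (\<Prod>p\<in>P. p) < (H+1)^CARD('n)"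
  obtains d where "d \<noteq> 0" "\<forall>i. \<bar>d$i\<bar> \<le> int H" "idot d y = 0" "\<forall>p\<in>P. int p dvd idot d (a p)"
proof -
  define S where "S = (\<Sum>i\<in>UNIV. \<bar>y$i\<bar>)"
  define \<phi> where "\<phi> x = (idot x y, restrict (\<lambda>p. idot x (a p) mod int p) P)" for x
  define T where "T = {-(S * int H)..S * int H} \<times> PiE P (\<lambda>p. {0..<int p})"
  have "finite T"
    using P(1) by (simp add: T_def finite_PiE)
  moreover have "card T < (H+1)^CARD('n)"
    using P(1) count by (simp add: T_def S_def card_cartesian_product card_PiE algebra_simps)
  moreover have "\<phi> x \<in> T" if "\<forall>i. x$i \<in> {0..int H}" for x
  proof -
    have "\<bar>idot x y\<bar> \<le> S * int H"
      unfolding S_def using that abs_idot_le[of x "int H" y] by (simp add: mult.commute)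
    moreover have "int p > 0" if "p \<in> P" for p
      using P(2) that by (cases p) auto
    ultimately show ?thesis
      by (auto simp: \<phi>_def T_def)
  qed
  ultimately obtain x1 x2 where x: "x1 \<noteq> x2" "\<phi> x1 = \<phi> x2" "\<forall>i. \<bar>(x1 - x2)$i\<bar> \<le> int H"
    by (rule box_pigeonhole)
  have dot: "idot x1 y = idot x2 y"
    and res: "restrict (\<lambda>p. idot x1 (a p) mod int p) P = restrict (\<lambda>p. idot x2 (a p) mod int p) P"
    using x(2) by (simp_all add: \<phi>_def)
  have "int p dvd idot (x1 - x2) (a p)" if "p \<in> P" for p
  proof -
    have "idot x1 (a p) mod int p = idot x2 (a p) mod int p"
      using fun_cong[OF res, of p] that by simp
    then show ?thesis
      by (simp add: mod_eq_dvd_iff idot_diff_left)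
  qed
  then show thesis
    using that[of "x1 - x2"] x(1,3) dot by (simp add: idot_diff_left)
qed

lemma box_count_exceeds:
  fixes S :: int
  assumes S: "S \<ge> 1" and H: "3 * S * int q \<le> int H ^ 2"
  shows "nat (2 * S * int H + 1) * q < (H + 1) ^ 3"
proof -
  have "int (nat (2 * S * int H + 1) * q) = (2 * S * int H + 1) * int q"
    using S by simp
  also have "\<dots> \<le> (3 * S * (int H + 1)) * int q"
  proof (intro mult_right_mono)
    have "3 * S * (int H + 1) = (2 * S * int H + 1) + (S * int H + 3 * S - 1)"
      by (simp add: algebra_simps)
    moreover have "0 \<le> S * int H"
      using S by simp
    ultimately show "2 * S * int H + 1 \<le> 3 * S * (int H + 1)"
      using S by linarith
  qed simp
  also have "\<dots> = (3 * S * int q) * (int H + 1)"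
    by (simp add: algebra_simps)
  also have "\<dots> \<le> int H ^ 2 * (int H + 1)"
    using H by (intro mult_right_mono) auto
  also have "\<dots> < (int H + 1) ^ 2 * (int H + 1)"
    by (intro mult_strict_right_mono power_strict_mono) auto
  also have "\<dots> = (int H + 1) ^ 3"
    by (simp add: power2_eq_square power3_eq_cube)
  finally show ?thesis
    by (metis of_nat_less_iff of_nat_1 of_nat_add of_nat_power)
qed

lemma sum_abs_nth_ge_1: "(y::int^'n) \<noteq> 0 \<Longrightarrow> 1 \<le> (\<Sum>i\<in>UNIV. \<bar>y$i\<bar>)"
proof -
  assume "y \<noteq> 0"
  then obtain i where "y$i \<noteq> 0"
    by (auto simp: vec_eq_iff)
  then have "1 \<le> \<bar>y$i\<bar>"
    by simp
  also have "\<dots> \<le> (\<Sum>i\<in>UNIV. \<bar>y$i\<bar>)"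
    by (rule member_le_sum) auto
  finally show ?thesis .
qed

lemma box_size_exists:
  fixes S :: int
  assumes "S \<ge> 1" "q > 0"
  obtains H :: nat where "3 * S * int q \<le> int H ^ 2" "real H ^ 2 \<le> 12 * real_of_int S * real q"
proof
  define z where "z = 3 * real_of_int S * real q"
  have "z \<ge> 1"
    using assms by (simp add: z_def mult_ge1_I)
  then have root: "sqrt z \<ge> 1"
    by simp
  then have H: "real (nat \<lceil>sqrt z\<rceil>) = of_int \<lceil>sqrt z\<rceil>"
    by simp
  have "sqrt z ^ 2 \<le> real (nat \<lceil>sqrt z\<rceil>) ^ 2"
    unfolding H using root by (intro power_mono le_of_int_ceiling) auto
  then have "z \<le> real (nat \<lceil>sqrt z\<rceil>) ^ 2"
    using \<open>z \<ge> 1\<close> by simp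
  then have "real_of_int (3 * S * int q) \<le> real_of_int (int (nat \<lceil>sqrt z\<rceil>) ^ 2)"
    by (simp only: z_def of_int_mult of_int_numeral of_int_of_nat_eq of_int_power)
  then show "3 * S * int q \<le> int (nat \<lceil>sqrt z\<rceil>) ^ 2"
    by (simp only: of_int_le_iff)
  have "real (nat \<lceil>sqrt z\<rceil>) ^ 2 \<le> (2 * sqrt z) ^ 2"
    unfolding H using root of_int_ceiling_le_add_one[of "sqrt z"] by (intro power_mono) linarith+
  then show "real (nat \<lceil>sqrt z\<rceil>) ^ 2 \<le> 12 * real_of_int S * real q"
    using \<open>z \<ge> 1\<close> by (simp add: z_def power_mult_distrib)
qed

section \<open>Small zeros modulo a squarefree number\<close>

lemma qform_vanishes_on_lines_mod_prime_factors:
  fixes M :: "int^3^3"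
  assumes M: "transpose M = M" and sq: "int q dvd qform (- adjugate M) y - t^2"
    and prim: "\<And>p. prime p \<Longrightarrow> p dvd q \<Longrightarrow> \<exists>k. \<not> int p dvd y$k"
  obtains a where "\<And>p x. p \<in> prime_factors q \<Longrightarrow> int p dvd idot x y \<Longrightarrow> int p dvd idot x (a p)
    \<Longrightarrow> int p dvd qform M x"
proof -
  have "\<forall>p\<in>prime_factors q. \<exists>a. \<forall>x. int p dvd idot x y \<longrightarrow> int p dvd idot x a \<longrightarrow> int p dvd qform M x"
  proof
    fix p assume "p \<in> prime_factors q"
    then have p: "prime p" "p dvd q"
      by (auto simp: in_prime_factors_iff)
    obtain k where "\<not> int p dvd y$k"
      using prim[OF p] by blast
    moreover have "int p dvd qform (- adjugate M) y - t^2"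
      using sq p(2) by (meson dvd_trans int_dvd_int_iff)
    ultimately show "\<exists>a. \<forall>x. int p dvd idot x y \<longrightarrow> int p dvd idot x a \<longrightarrow> int p dvd qform M x"
      using qform_vanishes_on_line_mod_prime[OF _ M] p(1) by simp
  qed
  then show thesis
    using that by (metis (no_types))
qed

lemma small_isotropic_vector_mod_squarefree:
  fixes M :: "int^3^3" and y y' :: "int^3"
  assumes q: "squarefree q" and M: "transpose M = M"
    and sq: "int q dvd qform (- adjugate M) y - t^2"
    and prim: "\<And>p. prime p \<Longrightarrow> p dvd q \<Longrightarrow> \<exists>k. \<not> int p dvd y$k"
    and y: "y = G *s y'" and y': "y' \<noteq> 0"
  obtains d H where "d \<noteq> 0" "int q dvd qform M d" "\<forall>i. \<bar>d$i\<bar> \<le> int H"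
    "real H ^ 2 \<le> 12 * real_of_int (\<Sum>i\<in>UNIV. \<bar>y'$i\<bar>) * real q"
proof -
  define P where "P = prime_factors q"
  obtain a where a: "\<And>p x. p \<in> P \<Longrightarrow> int p dvd idot x y \<Longrightarrow> int p dvd idot x (a p) \<Longrightarrow> int p dvd qform M x"
    using qform_vanishes_on_lines_mod_prime_factors[OF M sq prim] unfolding P_def by blast
  define S where "S = (\<Sum>i\<in>UNIV. \<bar>y'$i\<bar>)"
  have S: "S \<ge> 1"
    unfolding S_def using y' by (rule sum_abs_nth_ge_1)
  have "q > 0"
    using q by (rule squarefree_imp_pos)
  then obtain H where H: "3 * S * int q \<le> int H ^ 2" "real H ^ 2 \<le> 12 * real_of_int S * real q"
    using box_size_exists[OF S] by blast
  from H(1) have count: "nat (2 * S * int H + 1) * (\<Prod>p\<in>P. p) < (H + 1) ^ CARD(3)"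
    using box_count_exceeds[OF S] prod_prime_factors_squarefree[OF q] by (simp add: P_def)
  have "finite P" "0 \<notin> P"
    by (simp_all add: P_def)
  then obtain d where d: "d \<noteq> 0" "\<forall>i. \<bar>d$i\<bar> \<le> int H" "idot d y' = 0" "\<forall>p\<in>P. int p dvd idot d (a p)"
    using small_vector_orthogonal_with_congruences count unfolding S_def by blast
  have "idot d y = 0"
    using d(3) by (simp add: y idot_smult_right)
  have "q dvd nat \<bar>qform M d\<bar>"
  proof (rule squarefree_dvdI[OF q])
    fix p :: nat assume "prime p" "p dvd q"
    then show "p dvd nat \<bar>qform M d\<bar>"
      using a[of p d] d(4) \<open>idot d y = 0\<close> \<open>q > 0\<close> by (simp add: P_def in_prime_factors_iff)
  qed
  then show thesis
    using that[of d H] d(1,2) H(2) by (simp add: S_def)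
qed

lemma inorm_scaled_box_vector_le:
  fixes d y :: "int^3"
  assumes d: "\<forall>i. \<bar>d$i\<bar> \<le> int H"
    and H: "real H ^ 2 \<le> 12 * real_of_int (\<Sum>i\<in>UNIV. \<bar>y$i\<bar>) * real q1"
    and G: "int q2 \<le> G"
  shows "inorm (int q2 *s d) \<le> 11 * sqrt (real (q1 * q2)) * sqrt (inorm (G *s y))"
proof -
  have "inorm (int q2 *s d) ^ 2 = real q2 ^ 2 * inorm d ^ 2"
    by (simp add: inorm_smult power_mult_distrib)
  also have "\<dots> \<le> real q2 ^ 2 * (3 * (12 * real_of_int (\<Sum>i\<in>UNIV. \<bar>y$i\<bar>) * real q1))"
    using inorm_sq_le_if_abs_nth_le[OF d] H by (intro mult_left_mono) auto
  also have "\<dots> \<le> real q2 ^ 2 * (3 * (12 * (3 * inorm y) * real q1))"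
    using sum_abs_nth_le_inorm[of y] by (intro mult_left_mono mult_right_mono) auto
  also have "\<dots> = 108 * real (q1 * q2) * (real q2 * inorm y)"
    by (simp add: power2_eq_square algebra_simps)
  also have "\<dots> \<le> 108 * real (q1 * q2) * inorm (G *s y)"
    using G inorm_nonneg[of y] by (intro mult_left_mono) (auto simp: inorm_smult intro!: mult_right_mono)
  also have "\<dots> \<le> 121 * real (q1 * q2) * inorm (G *s y)"
    by (intro mult_right_mono) (auto simp: inorm_nonneg)
  finally have "inorm (int q2 *s d) \<le> sqrt (121 * real (q1 * q2) * inorm (G *s y))"
    by (rule real_le_rsqrt)
  then show ?thesis
    by (simp add: real_sqrt_mult)
qed

lemma small_zero_mod_squarefree:
  fixes M :: "int^3^3"
  assumes q: "squarefree q" and M: "transpose M = M" and y: "y \<noteq> 0"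
    and sq: "[qform (- adjugate M) y = t^2] (mod int q)"
  obtains x where "x \<noteq> 0" "[qform M x = 0] (mod int q)" "inorm x \<le> 11 * sqrt (real q) * sqrt (inorm y)"
proof -
  obtain q1 q2 G y' where split: "q = q1 * q2" "y = G *s y'" "0 < q2" "int q2 \<le> G"
    and prim: "\<And>p. prime p \<Longrightarrow> p dvd q1 \<Longrightarrow> \<exists>k. \<not> int p dvd y$k"
    using squarefree_modulus_split[OF q y] by blast
  have "y' \<noteq> 0"
    using y split(2) by auto
  have "squarefree q1"
    using q split(1) by (metis dvd_triv_left squarefree_mono)
  have "int q1 dvd qform (- adjugate M) y - t^2"
    using sq split(1) by (metis cong_iff_dvd_diff dvd_mult_left of_nat_mult)
  then obtain d H where d: "d \<noteq> 0" "int q1 dvd qform M d" "\<forall>i. \<bar>d$i\<bar> \<le> int H"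
    "real H ^ 2 \<le> 12 * real_of_int (\<Sum>i\<in>UNIV. \<bar>y'$i\<bar>) * real q1"
    using small_isotropic_vector_mod_squarefree[OF \<open>squarefree q1\<close> M _ prim split(2) \<open>y' \<noteq> 0\<close>] by blast
  show thesis
  proof (rule that[of "int q2 *s d"])
    show "int q2 *s d \<noteq> 0"
      using d(1) split(3) by (auto simp: vec_eq_iff)
    have "int q1 * int q2 dvd int q2 ^ 2 * qform M d"
      using d(2) by (simp add: power2_eq_square mult_dvd_mono)
    then show "[qform M (int q2 *s d) = 0] (mod int q)"
      by (simp add: qform_smult split(1) cong_0_iff)
    show "inorm (int q2 *s d) \<le> 11 * sqrt (real q) * sqrt (inorm y)"
      using inorm_scaled_box_vector_le[OF d(3,4) split(4)] split(1,2) by simp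
  qed
qed

section \<open>The minima\<close>

lemma scaled_axis_zero_mod:
  assumes "q > 0"
  shows "int q *s axis i 1 \<noteq> 0" "[qform M (int q *s axis i 1) = 0] (mod int q)"
    "inorm (int q *s axis i (1::int)) = real q"
proof -
  show "int q *s axis i 1 \<noteq> 0"
    using assms by (simp add: vec_eq_iff axis_def)
  show "[qform M (int q *s axis i 1) = 0] (mod int q)"
    by (simp add: qform_smult power2_eq_square cong_0_iff)
  have "(\<Sum>j\<in>UNIV. real_of_int (axis i (1::int) $ j) ^ 2) = (\<Sum>j\<in>UNIV. if j = i then 1 else 0)"
    by (rule sum.cong) (auto simp: axis_def)
  then have "inorm (axis i (1::int)) = 1"
    unfolding inorm_def by simp
  then show "inorm (int q *s axis i (1::int)) = real q"
    by (simp add: inorm_smult)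
qed

lemma mQ_le:
  assumes "x \<noteq> 0" "[qform M x = 0] (mod int q)"
  shows "mQ M q \<le> inorm x"
  unfolding mQ_def using assms by (intro cInf_lower bdd_belowI[of _ 0]) (auto simp: inorm_nonneg)

lemma mhatQ_le:
  assumes "x \<noteq> 0" "[qform M x = t^2] (mod int q)"
  shows "mhatQ M q \<le> inorm x"
  unfolding mhatQ_def using assms by (intro cInf_lower bdd_belowI[of _ 0]) (auto simp: inorm_nonneg)

lemma mQ_nonneg:
  assumes "q > 0"
  shows "mQ (M::int^'n^'n) q \<ge> 0"
proof -
  define x :: "int^'n" where "x = int q *s axis undefined 1"
  have "inorm x \<in> {inorm x | x. x \<noteq> 0 \<and> [qform M x = 0] (mod int q)}"
    using scaled_axis_zero_mod(1,2)[OF assms] unfolding x_def by blast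
  then show ?thesis
    unfolding mQ_def by (intro cInf_greatest) (auto simp: inorm_nonneg)
qed

lemma mhatQ_le_modulus:
  assumes "q > 0"
  shows "mhatQ (M::int^'n^'n) q \<le> real q"
proof -
  define x :: "int^'n" where "x = int q *s axis undefined 1"
  have "[qform M x = 0^2] (mod int q)"
    using scaled_axis_zero_mod(2)[OF assms] unfolding x_def by simp
  then have "mhatQ M q \<le> inorm x"
    using scaled_axis_zero_mod(1)[OF assms] unfolding x_def by (intro mhatQ_le)
  also have "inorm x = real q"
    unfolding x_def by (rule scaled_axis_zero_mod(3)[OF assms])
  finally show ?thesis .
qed

lemma mhatQ_greatest:
  assumes "q > 0" and le: "\<And>x t. x \<noteq> 0 \<Longrightarrow> [qform M x = t^2] (mod int q) \<Longrightarrow> c \<le> inorm x"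
  shows "c \<le> mhatQ (M::int^'n^'n) q"
proof -
  define x :: "int^'n" where "x = int q *s axis undefined 1"
  have "[qform M x = 0^2] (mod int q)"
    using scaled_axis_zero_mod(2)[OF assms(1)] unfolding x_def by simp
  then have "inorm x \<in> {inorm x | x. x \<noteq> 0 \<and> (\<exists>t. [qform M x = t^2] (mod int q))}"
    using scaled_axis_zero_mod(1)[OF assms(1)] unfolding x_def by blast
  then show ?thesis
    unfolding mhatQ_def using le by (intro cInf_greatest) auto
qed

lemma mQ_le_sqrt_mhatQ_adjugate:
  fixes M :: "int^3^3"
  assumes q: "squarefree q" and M: "transpose M = M"
  shows "mQ M q \<le> 11 * sqrt (real q) * sqrt (mhatQ (- adjugate M) q)"
proof -
  have "q > 0"
    using q by (rule squarefree_imp_pos)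
  have "(mQ M q)^2 / (121 * real q) \<le> mhatQ (- adjugate M) q"
  proof (rule mhatQ_greatest[OF \<open>q > 0\<close>])
    fix y t assume "y \<noteq> 0" "[qform (- adjugate M) y = t^2] (mod int q)"
    then obtain x where x: "x \<noteq> 0" "[qform M x = 0] (mod int q)"
      "inorm x \<le> 11 * sqrt (real q) * sqrt (inorm y)"
      using small_zero_mod_squarefree[OF q M] by blast
    have "mQ M q \<le> 11 * sqrt (real q) * sqrt (inorm y)"
      using mQ_le[OF x(1,2)] x(3) by linarith
    then have "(mQ M q)^2 \<le> (11 * sqrt (real q) * sqrt (inorm y))^2"
      using mQ_nonneg[OF \<open>q > 0\<close>] by (intro power_mono) auto
    also have "\<dots> = 121 * real q * inorm y"
      by (simp add: power_mult_distrib inorm_nonneg)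
    finally show "(mQ M q)^2 / (121 * real q) \<le> inorm y"
      using \<open>q > 0\<close> by (simp add: divide_le_eq mult.commute)
  qed
  then have "mQ M q \<le> sqrt (121 * real q * mhatQ (- adjugate M) q)"
    using \<open>q > 0\<close> by (intro real_le_rsqrt) (simp add: divide_le_eq mult.commute)
  then show ?thesis
    by (simp add: real_sqrt_mult)
qed

lemma admissible_uminus_adjugate:
  assumes "admissible (M::int^3^3) q"
  shows "admissible (- adjugate M) q"
proof -
  have M: "transpose M = M" and det: "coprime (det M) (int q)"
    using assms unfolding admissible_def by auto
  have "transpose (- adjugate M) = - adjugate M"
    using symmetric_matrix_nth[OF M]
    by (simp add: vec_eq_iff forall_3 transpose_def adjugate_3 algebra_simps)
  moreover have "coprime (det (- adjugate M)) (int q)"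
  proof (cases "det M = 0")
    case True
    then show ?thesis
      using det by simp
  next
    case False
    have "det (- adjugate M) = - (det M ^ 2)"
      using det_adjugate_3[OF False] by (simp add: det_3 algebra_simps)
    then show ?thesis
      using det by simp
  qed
  ultimately show ?thesis
    by (simp add: admissible_def)
qed

lemma B3star_le_sqrt_Bhat3:
  assumes q: "squarefree q"
  shows "B3star q \<le> 11 * sqrt (real q) * sqrt (Bhat3 q)"
  unfolding B3star_def
proof (rule cSup_least)
  show "{mQ (M::int^3^3) q | M. admissible M q} \<noteq> {}"
  proof -
    have "admissible (mat 1 :: int^3^3) q"
      by (simp add: admissible_def transpose_mat)
    then show ?thesis by blast
  qed
  have "q > 0"
    using q by (rule squarefree_imp_pos)
  fix m assume "m \<in> {mQ (M::int^3^3) q | M. admissible M q}"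
  then obtain M :: "int^3^3" where m: "m = mQ M q" and M: "admissible M q"
    by blast
  have "mhatQ (- adjugate M) q \<le> Bhat3 q"
    unfolding Bhat3_def using admissible_uminus_adjugate[OF M] mhatQ_le_modulus[OF \<open>q > 0\<close>]
    by (intro cSup_upper bdd_aboveI[of _ "real q"]) auto
  then have "11 * sqrt (real q) * sqrt (mhatQ (- adjugate M) q) \<le> 11 * sqrt (real q) * sqrt (Bhat3 q)"
    by (intro mult_left_mono) auto
  moreover have "m \<le> 11 * sqrt (real q) * sqrt (mhatQ (- adjugate M) q)"
    using mQ_le_sqrt_mhatQ_adjugate[OF q] M m by (simp add: admissible_def)
  ultimately show "m \<le> 11 * sqrt (real q) * sqrt (Bhat3 q)"
    by linarith
qed

theorem lemma1:
  "\<exists>C>0. (\<forall>(q::nat) (M::int^3^3). odd q \<and> squarefree q \<and> admissible M q \<longrightarrow>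
            mQ M q \<le> C * sqrt (real q) * sqrt (mhatQ (- adjugate M) q))
       \<and> (\<forall>q::nat. odd q \<and> squarefree q \<longrightarrow>
            B3star q \<le> C * sqrt (real q) * sqrt (Bhat3 q))"
  using mQ_le_sqrt_mhatQ_adjugate B3star_le_sqrt_Bhat3
  by (intro exI[of _ 11]) (auto simp: admissible_def)

end
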